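(* Let $\alpha>0$, let $n$ be a positive integer and $F\in\mathcal{B}^{\alpha+n}$. Then there exists $A>0$ such that for every analytic vector-valued function $\mathbf{g}=(g_0,g_1,\dots,g_{n-1})$ (each $g_k\in H(\mathbb{D})$) with $\|\mathbf{g}\|_*<A$, every solution $f\in H(\mathbb{D})$ of the differential equation $$f^{(n)}+f^{(n-1)}g_{n-1}+\cdots+f'g_1+fg_0=F$$ belongs to $\mathcal{B}^{\alpha}$.
   Context: $\mathbb{D}$ is the open unit disc in $\mathbb{C}$ and $H(\mathbb{D})$ the space of analytic functions on $\mathbb{D}$. For $\gamma>0$, $\mathcal{B}^{\gamma}$ is the space of $f\in H(\mathbb{D})$ with $|f(0)|+\sup_{z\in\mathbb{D}}(1-|z|^2)^{\gamma}|f'(z)|<\infty$. For $\mathbf{g}=(g_0,\dots,g_{n-1})$, $\|\mathbf{g}\|_*=\max\{\|g_k\|_k:0\le k\le n-1\}$, where for $1\le k\le n-1$, $\|g\|_k=\sup_{z\in\mathbb{D}}(1-|z|^2)^{n-k}|g(z)|$, and $\|g\|_0=\sup_{z\in\mathbb{D}}(1-|z|^2)^{n}|g(z)|$ if $\alpha>1$, $\|g\|_0=\sup_{z\in\mathbb{D}}(1-|z|^2)^{n}\log\frac{2}{1-|z|^2}|g(z)|$ if $\alpha=1$, and $\|g\|_0=\sup_{z\in\mathbb{D}}(1-|z|^2)^{n+\alpha-1}|g(z)|$ if $0<\alpha<1$. *)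

theory Defs
  imports "HOL-Complex_Analysis.Complex_Analysis"
begin

definition bloch_type :: "real \<Rightarrow> (complex \<Rightarrow> complex) set" where
  "bloch_type \<gamma> = {f. f holomorphic_on ball 0 1 \<and>
      (\<exists>C. \<forall>z\<in>ball 0 1. (1 - (cmod z)\<^sup>2) powr \<gamma> * cmod (deriv f z) \<le> C)}"

definition coeff_weight :: "real \<Rightarrow> nat \<Rightarrow> nat \<Rightarrow> complex \<Rightarrow> real" where
  "coeff_weight \<alpha> n k z =
     (if k \<ge> 1 then (1 - (cmod z)\<^sup>2) ^ (n - k)
      else if \<alpha> > 1 then (1 - (cmod z)\<^sup>2) ^ n
      else if \<alpha> = 1 then (1 - (cmod z)\<^sup>2) ^ n * ln (2 / (1 - (cmod z)\<^sup>2))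
      else (1 - (cmod z)\<^sup>2) powr (real n + \<alpha> - 1))"

definition coeff_norm :: "real \<Rightarrow> nat \<Rightarrow> nat \<Rightarrow> (complex \<Rightarrow> complex) \<Rightarrow> ereal" where
  "coeff_norm \<alpha> n k g = (SUP z\<in>ball 0 1. ereal (coeff_weight \<alpha> n k z * cmod (g z)))"

definition vec_norm :: "real \<Rightarrow> nat \<Rightarrow> (nat \<Rightarrow> complex \<Rightarrow> complex) \<Rightarrow> ereal" where
  "vec_norm \<alpha> n g = (MAX k\<in>{..<n}. coeff_norm \<alpha> n k (g k))"

end

theory Submission
  imports Defs
begin

(* Fix u and let N be the maximum of (1 - |v|)^(\<alpha>+n-1) |f^(n)(v)| over |v| <= |u|; it is finite by
   compactness. Integrating along radii, every f^(j) with 1 <= j <= n grows at most like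
   (1 + 1/\<alpha>)^(n-j) (N + S) (1 - |v|)^-(\<alpha>+j-1), where S = sum_{i<n} |f^(i)(0)|, and f itself grows
   like (1 - |v|)^(1-\<alpha>), like log (1/(1 - |v|)), or stays bounded according as \<alpha> > 1, \<alpha> = 1
   or \<alpha> < 1: these are exactly the three weights in the norm of g_0. Solving the equation for f^(n)
   at the maximiser gives N <= K + c A (N + S), with K controlling the growth of F. For A small this
   yields N <= 2K + S independently of u, and a last radial integration shows that f' grows like
   (1 - |z|)^-\<alpha>, i.e. f belongs to B^\<alpha>. *)

lemma one_minus_le_one_minus_power2:
  fixes r :: real
  assumes "0 \<le> r" "r \<le> 1"
  shows "1 - r \<le> 1 - r\<^sup>2"
  using assms by (simp add: power2_eq_square mult_left_le_one_le)

lemma one_minus_power2_le_double: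
  fixes r :: real
  shows "1 - r\<^sup>2 \<le> 2 * (1 - r)"
  using zero_le_power2[of "1 - r"] by (simp add: power2_eq_square algebra_simps)

lemma le_mult_powr_uminus:
  fixes x :: real
  assumes "0 < x" "x powr p * a \<le> C"
  shows "a \<le> C * x powr (-p)"
proof -
  have "a = x powr p * a * x powr (-p)" using assms(1) by (simp add: powr_minus field_simps)
  also have "\<dots> \<le> C * x powr (-p)" using assms(2) by (intro mult_right_mono) auto
  finally show ?thesis .
qed

lemma add_divide_le_one_plus_inverse_mult:
  fixes a b d :: real
  assumes "0 \<le> a" and "0 \<le> b" and "0 < d"
  shows "a + b / d \<le> (1 + 1 / d) * (a + b)"
proof -
  have "a + b / d \<le> (a + b / d) + (b + a / d)" using assms by simp
  also have "\<dots> = (1 + 1 / d) * (a + b)" by (simp add: algebra_simps add_divide_distrib)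
  finally show ?thesis .
qed

section \<open>Radial integration\<close>

lemma holomorphic_norm_le_radial_majorant:
  fixes h :: "complex \<Rightarrow> complex"
  assumes hol: "h holomorphic_on ball 0 1" and z: "cmod z < 1"
    and \<phi>_cont: "continuous_on {0..1} \<phi>"
    and \<phi>_deriv: "\<And>t. 0 < t \<Longrightarrow> t < 1 \<Longrightarrow> (\<phi> has_real_derivative \<phi>' t) (at t)"
    and bound: "\<And>t. 0 < t \<Longrightarrow> t < 1 \<Longrightarrow> cmod z * cmod (deriv h (of_real t * z)) \<le> \<phi>' t"
  shows "cmod (h z) \<le> cmod (h 0) + (\<phi> 1 - \<phi> 0)"
proof -
  define p where "p = (\<lambda>t::real. of_real t * z)"
  have p_in_ball: "p t \<in> ball 0 1" if "t \<in> {0..1}" for t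
    using that z mult_left_le_one_le[of "cmod z" t] by (simp add: p_def norm_mult)
  have p_deriv: "(p has_vector_derivative z) (at t)" for t
    unfolding p_def by (auto intro!: derivative_eq_intros)
  have "continuous_on {0..1} (h \<circ> p)"
  proof (rule continuous_on_compose)
    show "continuous_on {0..1} p" unfolding p_def by (intro continuous_intros)
    show "continuous_on (p ` {0..1}) h"
      using holomorphic_on_imp_continuous_on[OF hol] p_in_ball
      by (meson continuous_on_subset image_subsetI)
  qed
  then have "norm ((h \<circ> p) 1 - (h \<circ> p) 0) \<le> \<phi> 1 - \<phi> 0"
  proof (rule differentiable_bound_general[OF zero_less_one _ \<phi>_cont])
    fix t :: real assume t: "0 < t" "t < 1"
    then have "(h has_field_derivative deriv h (p t)) (at (p t))"
      using p_in_ball by (intro holomorphic_derivI[OF hol]) auto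
    then show "((h \<circ> p) has_vector_derivative (z * deriv h (p t))) (at t)"
      by (rule field_vector_diff_chain_at[OF p_deriv])
    show "(\<phi> has_vector_derivative \<phi>' t) (at t)"
      using \<phi>_deriv[OF t] by (simp add: has_real_derivative_iff_has_vector_derivative)
    show "norm (z * deriv h (p t)) \<le> \<phi>' t"
      using bound[OF t] by (simp add: p_def norm_mult)
  qed
  then show ?thesis
    using norm_triangle_ineq2[of "h z" "h 0"] by (simp add: p_def)
qed

lemma holomorphic_growth_powr:
  fixes h :: "complex \<Rightarrow> complex"
  assumes hol: "h holomorphic_on ball 0 1" and z: "cmod z < 1" and "\<beta> \<noteq> 1" and "E \<ge> 0"
    and deriv_bound: "\<And>u. cmod u \<le> cmod z \<Longrightarrow> cmod (deriv h u) \<le> E * (1 - cmod u) powr (-\<beta>)"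
  shows "cmod (h z) \<le> cmod (h 0) + E / (\<beta> - 1) * ((1 - cmod z) powr (1 - \<beta>) - 1)"
proof -
  define r where "r = cmod z"
  have r: "0 \<le> r" "r < 1" using z by (auto simp: r_def)
  have pos: "0 < 1 - t * r" if "t \<le> 1" for t
    using r mult_right_mono[OF that r(1)] by simp
  define \<phi> where "\<phi> = (\<lambda>t::real. E / (\<beta> - 1) * (1 - t * r) powr (1 - \<beta>))"
  have "cmod (h z) \<le> cmod (h 0) + (\<phi> 1 - \<phi> 0)"
  proof (rule holomorphic_norm_le_radial_majorant[OF hol z])
    show "continuous_on {0..1} \<phi>"
      unfolding \<phi>_def using pos by (intro continuous_intros) (auto simp: less_imp_neq)
    fix t :: real assume t: "0 < t" "t < 1"
    have "(\<phi> has_real_derivative E / (\<beta> - 1) * ((1 - \<beta>) * (1 - t * r) powr (1 - \<beta> - 1) * (- r))) (at t)"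
      unfolding \<phi>_def using pos[of t] t \<open>\<beta> \<noteq> 1\<close> by (auto intro!: derivative_eq_intros)
    moreover have "E / (\<beta> - 1) * ((1 - \<beta>) * (1 - t * r) powr (1 - \<beta> - 1) * (- r))
        = E * r * (1 - t * r) powr (-\<beta>)"
      using \<open>\<beta> \<noteq> 1\<close> by (simp add: field_simps)
    ultimately show "(\<phi> has_real_derivative E * r * (1 - t * r) powr (-\<beta>)) (at t)"
      by simp
    have "cmod (deriv h (of_real t * z)) \<le> E * (1 - t * r) powr (-\<beta>)"
      using deriv_bound[of "of_real t * z"] t r
      by (simp add: norm_mult r_def mult_left_le_one_le)
    from mult_left_mono[OF this r(1)]
    show "cmod z * cmod (deriv h (of_real t * z)) \<le> E * r * (1 - t * r) powr (-\<beta>)"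
      by (simp add: r_def mult_ac)
  qed
  then show ?thesis by (simp add: \<phi>_def r_def diff_divide_distrib right_diff_distrib)
qed

lemma holomorphic_growth_ln:
  fixes h :: "complex \<Rightarrow> complex"
  assumes hol: "h holomorphic_on ball 0 1" and z: "cmod z < 1" and "E \<ge> 0"
    and deriv_bound: "\<And>u. cmod u \<le> cmod z \<Longrightarrow> cmod (deriv h u) \<le> E / (1 - cmod u)"
  shows "cmod (h z) \<le> cmod (h 0) + E * ln (1 / (1 - cmod z))"
proof -
  define r where "r = cmod z"
  have r: "0 \<le> r" "r < 1" using z by (auto simp: r_def)
  have pos: "0 < 1 - t * r" if "t \<le> 1" for t
    using r mult_right_mono[OF that r(1)] by simp
  define \<phi> where "\<phi> = (\<lambda>t::real. - E * ln (1 - t * r))"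
  have "cmod (h z) \<le> cmod (h 0) + (\<phi> 1 - \<phi> 0)"
  proof (rule holomorphic_norm_le_radial_majorant[OF hol z])
    show "continuous_on {0..1} \<phi>"
      unfolding \<phi>_def using pos by (intro continuous_intros) (fastforce simp: algebra_simps)+
    fix t :: real assume t: "0 < t" "t < 1"
    have "(\<phi> has_real_derivative - E * ((- r) / (1 - t * r))) (at t)"
      unfolding \<phi>_def using pos[of t] t by (auto intro!: derivative_eq_intros)
    then show "(\<phi> has_real_derivative E * r / (1 - t * r)) (at t)" by simp
    have "cmod (deriv h (of_real t * z)) \<le> E / (1 - t * r)"
      using deriv_bound[of "of_real t * z"] t r
      by (simp add: norm_mult r_def mult_left_le_one_le)
    from mult_left_mono[OF this r(1)]
    show "cmod z * cmod (deriv h (of_real t * z)) \<le> E * r / (1 - t * r)"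
      by (simp add: r_def mult.commute)
  qed
  then show ?thesis using r by (simp add: \<phi>_def r_def ln_div)
qed

lemma holomorphic_growth_powr_gt1:
  fixes h :: "complex \<Rightarrow> complex"
  assumes hol: "h holomorphic_on ball 0 1" and z: "cmod z < 1" and "\<beta> > 1" and "E \<ge> 0"
    and deriv_bound: "\<And>u. cmod u \<le> cmod z \<Longrightarrow> cmod (deriv h u) \<le> E * (1 - cmod u) powr (-\<beta>)"
  shows "cmod (h z) \<le> (cmod (h 0) + E / (\<beta> - 1)) * (1 - cmod z) powr (1 - \<beta>)"
proof -
  have x: "0 < 1 - cmod z" "1 - cmod z \<le> 1" using z by auto
  have "1 = 1 powr (1 - \<beta>)" by simp
  also have "\<dots> \<le> (1 - cmod z) powr (1 - \<beta>)"
    using x \<open>\<beta> > 1\<close> by (intro powr_mono2') auto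
  finally have "cmod (h 0) \<le> cmod (h 0) * (1 - cmod z) powr (1 - \<beta>)"
    by (simp add: mult_le_cancel_left1)
  moreover have "E / (\<beta> - 1) * ((1 - cmod z) powr (1 - \<beta>) - 1) \<le> E / (\<beta> - 1) * (1 - cmod z) powr (1 - \<beta>)"
    using assms by (intro mult_left_mono) auto
  ultimately show ?thesis
    using holomorphic_growth_powr[OF hol z _ _ deriv_bound] assms by (simp add: distrib_right)
qed

lemma holomorphic_bounded_powr_lt1:
  fixes h :: "complex \<Rightarrow> complex"
  assumes hol: "h holomorphic_on ball 0 1" and z: "cmod z < 1" and "\<beta> < 1" and "E \<ge> 0"
    and deriv_bound: "\<And>u. cmod u \<le> cmod z \<Longrightarrow> cmod (deriv h u) \<le> E * (1 - cmod u) powr (-\<beta>)"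
  shows "cmod (h z) \<le> cmod (h 0) + E / (1 - \<beta>)"
proof -
  have "E / (\<beta> - 1) * ((1 - cmod z) powr (1 - \<beta>) - 1) = E / (1 - \<beta>) * (1 - (1 - cmod z) powr (1 - \<beta>))"
    using \<open>\<beta> < 1\<close> by (simp add: field_simps)
  also have "\<dots> \<le> E / (1 - \<beta>)"
    using assms by (intro mult_left_le) auto
  finally show ?thesis
    using holomorphic_growth_powr[OF hol z _ _ deriv_bound] assms by simp
qed

lemma bloch_type_growth:
  assumes "F \<in> bloch_type \<gamma>" and "\<gamma> > 1"
  obtains K where "K \<ge> 0" and "\<And>z. cmod z < 1 \<Longrightarrow> cmod (F z) \<le> K * (1 - cmod z) powr (1 - \<gamma>)"
proof -
  from assms(1) have hol: "F holomorphic_on ball 0 1"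
    and "\<exists>C. \<forall>z\<in>ball 0 1. (1 - (cmod z)\<^sup>2) powr \<gamma> * cmod (deriv F z) \<le> C"
    unfolding bloch_type_def by auto
  then obtain C where C: "\<And>z. cmod z < 1 \<Longrightarrow> (1 - (cmod z)\<^sup>2) powr \<gamma> * cmod (deriv F z) \<le> C"
    by (meson mem_ball_0)
  have "cmod (deriv F 0) \<le> C" using C[of 0] by simp
  then have "C \<ge> 0" by (meson norm_ge_zero order_trans)
  have deriv_bound: "cmod (deriv F u) \<le> C * (1 - cmod u) powr (-\<gamma>)" if "cmod u < 1" for u
  proof (rule le_mult_powr_uminus)
    show "0 < 1 - cmod u" using that by simp
    have "(1 - cmod u) powr \<gamma> \<le> (1 - (cmod u)\<^sup>2) powr \<gamma>"
      using that \<open>\<gamma> > 1\<close> one_minus_le_one_minus_power2[of "cmod u"] by (intro powr_mono2) auto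
    then show "(1 - cmod u) powr \<gamma> * cmod (deriv F u) \<le> C"
      using C[OF that] by (meson mult_right_mono norm_ge_zero order_trans)
  qed
  show thesis
  proof
    show "0 \<le> cmod (F 0) + C / (\<gamma> - 1)" using \<open>C \<ge> 0\<close> \<open>\<gamma> > 1\<close> by simp
    show "cmod (F z) \<le> (cmod (F 0) + C / (\<gamma> - 1)) * (1 - cmod z) powr (1 - \<gamma>)" if "cmod z < 1" for z
      using that assms \<open>C \<ge> 0\<close> deriv_bound
      by (intro holomorphic_growth_powr_gt1[OF hol]) auto
  qed
qed

lemma bloch_typeI_deriv_growth:
  assumes hol: "f holomorphic_on ball 0 1" and "\<alpha> \<ge> 0"
    and deriv_bound: "\<And>z. cmod z < 1 \<Longrightarrow> cmod (deriv f z) \<le> C * (1 - cmod z) powr (-\<alpha>)"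
  shows "f \<in> bloch_type \<alpha>"
  unfolding bloch_type_def
proof (intro CollectI conjI hol exI ballI)
  fix z :: complex assume "z \<in> ball 0 1"
  then have z: "cmod z < 1" by simp
  have "(1 - (cmod z)\<^sup>2) powr \<alpha> * cmod (deriv f z) \<le> (2 * (1 - cmod z)) powr \<alpha> * (C * (1 - cmod z) powr (-\<alpha>))"
  proof (rule mult_mono)
    show "(1 - (cmod z)\<^sup>2) powr \<alpha> \<le> (2 * (1 - cmod z)) powr \<alpha>"
      using z \<open>\<alpha> \<ge> 0\<close> one_minus_power2_le_double[of "cmod z"] by (intro powr_mono2) (auto simp: power_le_one)
  qed (use deriv_bound[OF z] in auto)
  also have "\<dots> = 2 powr \<alpha> * C"
  proof -
    have "(2 * (1 - cmod z)) powr \<alpha> = 2 powr \<alpha> * (1 - cmod z) powr \<alpha>"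
      using z powr_mult[of 2 "1 - cmod z" \<alpha>] by simp
    then show ?thesis using z by (simp add: powr_minus)
  qed
  finally show "(1 - (cmod z)\<^sup>2) powr \<alpha> * cmod (deriv f z) \<le> 2 powr \<alpha> * C" .
qed

section \<open>Growth of the derivatives of a solution\<close>

lemma higher_deriv_growth:
  fixes f :: "complex \<Rightarrow> complex"
  assumes hol: "f holomorphic_on ball 0 1" and "\<alpha> > 0" and "R < 1" and "N \<ge> 0"
    and top_bound: "\<And>u. cmod u \<le> R \<Longrightarrow>
           cmod ((deriv ^^ n) f u) \<le> N * (1 - cmod u) powr (-(\<alpha> + real n - 1))"
    and "1 \<le> j" and "j \<le> n" and "cmod u \<le> R"
  shows "cmod ((deriv ^^ j) f u) \<le> (1 + 1 / \<alpha>) ^ (n - j) * (N + (\<Sum>i<n. cmod ((deriv ^^ i) f 0)))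
           * (1 - cmod u) powr (-(\<alpha> + real j - 1))"
  using \<open>j \<le> n\<close> \<open>1 \<le> j\<close> \<open>cmod u \<le> R\<close>
proof (induction j arbitrary: u rule: inc_induct)
  case base
  have "N * (1 - cmod u) powr (-(\<alpha> + real n - 1))
      \<le> (N + (\<Sum>i<n. cmod ((deriv ^^ i) f 0))) * (1 - cmod u) powr (-(\<alpha> + real n - 1))"
    by (intro mult_right_mono) (simp_all add: sum_nonneg)
  from order_trans[OF top_bound[OF base(2)] this] show ?case by simp
next
  case (step m)
  define S where "S = (\<Sum>i<n. cmod ((deriv ^^ i) f 0))"
  define E where "E = (1 + 1 / \<alpha>) ^ (n - Suc m) * (N + S)"
  have "S \<ge> 0" unfolding S_def by (simp add: sum_nonneg)
  have "1 \<le> (1 + 1 / \<alpha>) ^ (n - Suc m)" using \<open>\<alpha> > 0\<close> by (simp add: one_le_power)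
  then have "N + S \<le> E" unfolding E_def using \<open>N \<ge> 0\<close> \<open>S \<ge> 0\<close> by (simp add: mult_le_cancel_right1)
  have "E \<ge> 0" unfolding E_def using \<open>\<alpha> > 0\<close> \<open>N \<ge> 0\<close> \<open>S \<ge> 0\<close> by simp
  have "cmod ((deriv ^^ m) f u) \<le> (cmod ((deriv ^^ m) f 0) + E / (\<alpha> + real m - 1))
          * (1 - cmod u) powr (1 - (\<alpha> + real m))"
  proof (rule holomorphic_growth_powr_gt1)
    show "(deriv ^^ m) f holomorphic_on ball 0 1" by (rule holomorphic_higher_deriv[OF hol]) auto
    show "cmod u < 1" using step.prems \<open>R < 1\<close> by simp
    show "1 < \<alpha> + real m" using \<open>\<alpha> > 0\<close> step.prems by simp
    fix v assume "cmod v \<le> cmod u"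
    then show "cmod (deriv ((deriv ^^ m) f) v) \<le> E * (1 - cmod v) powr (-(\<alpha> + real m))"
      using step.IH[of v] step.prems unfolding E_def S_def by simp
  qed (use \<open>E \<ge> 0\<close> in simp)
  also have "cmod ((deriv ^^ m) f 0) + E / (\<alpha> + real m - 1) \<le> E + E / \<alpha>"
  proof (rule add_mono)
    have "cmod ((deriv ^^ m) f 0) \<le> S" unfolding S_def using step.hyps by (intro member_le_sum) auto
    then show "cmod ((deriv ^^ m) f 0) \<le> E" using \<open>N + S \<le> E\<close> \<open>N \<ge> 0\<close> by linarith
    show "E / (\<alpha> + real m - 1) \<le> E / \<alpha>"
      using \<open>E \<ge> 0\<close> \<open>\<alpha> > 0\<close> step.prems by (intro divide_left_mono) auto
  qed
  also have "E + E / \<alpha> = (1 + 1 / \<alpha>) ^ Suc (n - Suc m) * (N + S)"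
    unfolding E_def by (simp add: field_simps)
  also have "Suc (n - Suc m) = n - m" using step.hyps by simp
  finally show ?case
    unfolding S_def by (simp add: mult_right_mono)
qed

section \<open>The lower-order terms of the equation\<close>

lemma coeff_weight_nonneg:
  assumes "cmod z < 1"
  shows "0 \<le> coeff_weight \<alpha> n k z"
proof -
  have "(cmod z)\<^sup>2 < 1" using assms by (simp add: power_less_one_iff)
  then have y: "0 < 1 - (cmod z)\<^sup>2" "1 - (cmod z)\<^sup>2 \<le> 1"
    using zero_le_power2[of "cmod z"] by linarith+
  then have "1 \<le> 2 / (1 - (cmod z)\<^sup>2)"
    using le_divide_eq_1_pos[OF y(1), of 2] by linarith
  then have "0 \<le> ln (2 / (1 - (cmod z)\<^sup>2))" by simp
  with y zero_le_power2[of "cmod z"] show ?thesis unfolding coeff_weight_def by auto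
qed

lemma coeff_weight_le_of_vec_norm_less:
  assumes "vec_norm \<alpha> n g < ereal A" and "k < n" and "z \<in> ball 0 1"
  shows "coeff_weight \<alpha> n k z * cmod (g k z) \<le> A"
proof -
  have "ereal (coeff_weight \<alpha> n k z * cmod (g k z)) \<le> coeff_norm \<alpha> n k (g k)"
    unfolding coeff_norm_def using assms(3) by (rule SUP_upper)
  also have "\<dots> \<le> vec_norm \<alpha> n g"
    unfolding vec_norm_def using assms(2) by (intro Max_ge) auto
  finally have "ereal (coeff_weight \<alpha> n k z * cmod (g k z)) < ereal A"
    using assms(1) by (rule order.strict_trans1)
  then show ?thesis by simp
qed

lemma weighted_positive_order_term_le:
  fixes D G P :: real
  assumes z: "cmod z < 1" and "1 \<le> k" and "k < n" and "G \<ge> 0" and "P \<ge> 0"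
    and coeff: "coeff_weight \<alpha> n k z * G \<le> A"
    and deriv_bound: "D \<le> P * (1 - cmod z) powr (-(\<alpha> + real k - 1))"
  shows "(1 - cmod z) powr (\<alpha> + real n - 1) * D * G \<le> A * P"
proof -
  define x where "x = 1 - cmod z"
  have x: "0 < x" "x \<le> 1 - (cmod z)\<^sup>2"
    using z one_minus_le_one_minus_power2[of "cmod z"] by (auto simp: x_def)
  have "x ^ (n - k) * G \<le> (1 - (cmod z)\<^sup>2) ^ (n - k) * G"
    using x \<open>G \<ge> 0\<close> by (intro mult_right_mono power_mono) auto
  also have "\<dots> \<le> A" using coeff \<open>1 \<le> k\<close> by (simp add: coeff_weight_def)
  finally have weighted_coeff: "x ^ (n - k) * G \<le> A" .
  have "\<alpha> + real n - 1 = (\<alpha> + real k - 1) + real (n - k)" using \<open>k < n\<close> by simp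
  then have split: "x powr (\<alpha> + real n - 1) = x powr (\<alpha> + real k - 1) * x ^ (n - k)"
    by (simp only: powr_add powr_realpow[OF \<open>0 < x\<close>])
  have "x powr (\<alpha> + real n - 1) * D * G \<le> x powr (\<alpha> + real n - 1) * (P * x powr (-(\<alpha> + real k - 1))) * G"
    using deriv_bound \<open>G \<ge> 0\<close> by (intro mult_right_mono mult_left_mono) (auto simp: x_def)
  also have "\<dots> = P * (x ^ (n - k) * G)"
    using \<open>0 < x\<close> unfolding split by (simp add: powr_add[symmetric] mult_ac)
  also have "\<dots> \<le> P * A" using weighted_coeff \<open>P \<ge> 0\<close> by (rule mult_left_mono)
  finally show ?thesis unfolding x_def by (simp add: mult.commute)
qed

lemma weighted_zeroth_term_le_gt1:
  assumes hol: "f holomorphic_on ball 0 1" and z: "cmod z < 1" and "\<alpha> > 1" and "E \<ge> 0" and "G \<ge> 0"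
    and deriv_bound: "\<And>u. cmod u \<le> cmod z \<Longrightarrow> cmod (deriv f u) \<le> E * (1 - cmod u) powr (-\<alpha>)"
    and coeff: "coeff_weight \<alpha> n 0 z * G \<le> A"
  shows "(1 - cmod z) powr (\<alpha> + real n - 1) * cmod (f z) * G \<le> A * (cmod (f 0) + E / (\<alpha> - 1))"
proof -
  define K where "K = cmod (f 0) + E / (\<alpha> - 1)"
  define x where "x = 1 - cmod z"
  have x: "0 < x" "x \<le> 1 - (cmod z)\<^sup>2"
    using z one_minus_le_one_minus_power2[of "cmod z"] by (auto simp: x_def)
  have "K \<ge> 0" using \<open>\<alpha> > 1\<close> \<open>E \<ge> 0\<close> by (simp add: K_def)
  have growth: "cmod (f z) \<le> K * x powr (1 - \<alpha>)"
    unfolding K_def x_def using assms by (intro holomorphic_growth_powr_gt1[OF hol z]) auto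
  have "x ^ n * G \<le> (1 - (cmod z)\<^sup>2) ^ n * G"
    using x \<open>G \<ge> 0\<close> by (intro mult_right_mono power_mono) auto
  also have "\<dots> \<le> A" using coeff \<open>\<alpha> > 1\<close> by (simp add: coeff_weight_def)
  finally have weighted_coeff: "x ^ n * G \<le> A" .
  have "x powr (\<alpha> + real n - 1) * cmod (f z) * G \<le> x powr (\<alpha> + real n - 1) * (K * x powr (1 - \<alpha>)) * G"
    using growth \<open>G \<ge> 0\<close> by (intro mult_right_mono mult_left_mono) auto
  also have "\<dots> = K * (x ^ n * G)"
    using \<open>0 < x\<close> by (simp add: powr_realpow[symmetric] powr_add[symmetric] mult_ac)
  also have "\<dots> \<le> K * A" using weighted_coeff \<open>K \<ge> 0\<close> by (rule mult_left_mono)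
  finally show ?thesis unfolding x_def K_def by (simp add: mult.commute)
qed

lemma weighted_zeroth_term_le_lt1:
  assumes hol: "f holomorphic_on ball 0 1" and z: "cmod z < 1" and "\<alpha> < 1" and "\<alpha> + real n \<ge> 1"
    and "E \<ge> 0" and "G \<ge> 0"
    and deriv_bound: "\<And>u. cmod u \<le> cmod z \<Longrightarrow> cmod (deriv f u) \<le> E * (1 - cmod u) powr (-\<alpha>)"
    and coeff: "coeff_weight \<alpha> n 0 z * G \<le> A"
  shows "(1 - cmod z) powr (\<alpha> + real n - 1) * cmod (f z) * G \<le> A * (cmod (f 0) + E / (1 - \<alpha>))"
proof -
  define K where "K = cmod (f 0) + E / (1 - \<alpha>)"
  have bounded: "cmod (f z) \<le> K"
    unfolding K_def using assms by (intro holomorphic_bounded_powr_lt1[OF hol z]) auto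
  have "(1 - cmod z) powr (\<alpha> + real n - 1) \<le> (1 - (cmod z)\<^sup>2) powr (\<alpha> + real n - 1)"
    using z \<open>\<alpha> + real n \<ge> 1\<close> one_minus_le_one_minus_power2[of "cmod z"] by (intro powr_mono2) auto
  then have "(1 - cmod z) powr (\<alpha> + real n - 1) * G \<le> A"
    using coeff \<open>\<alpha> < 1\<close> \<open>G \<ge> 0\<close> by (simp add: coeff_weight_def add.commute order_trans[OF mult_right_mono])
  moreover have "A \<ge> 0"
    using coeff coeff_weight_nonneg[OF z] \<open>G \<ge> 0\<close> by (meson order_trans zero_le_mult_iff)
  ultimately have "((1 - cmod z) powr (\<alpha> + real n - 1) * G) * cmod (f z) \<le> A * K"
    by (rule mult_mono[OF _ bounded _ norm_ge_zero])
  then show ?thesis unfolding K_def by (simp add: mult_ac)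
qed

lemma weighted_zeroth_term_le_eq1:
  assumes hol: "f holomorphic_on ball 0 1" and z: "cmod z < 1" and "E \<ge> 0" and "G \<ge> 0"
    and deriv_bound: "\<And>u. cmod u \<le> cmod z \<Longrightarrow> cmod (deriv f u) \<le> E / (1 - cmod u)"
    and coeff: "coeff_weight 1 n 0 z * G \<le> A"
  shows "(1 - cmod z) ^ n * cmod (f z) * G \<le> A * ((1 / ln 2 + 1) * (cmod (f 0) + E))"
proof -
  define x where "x = 1 - cmod z"
  define y where "y = 1 - (cmod z)\<^sup>2"
  define L where "L = ln (2 / y)"
  define K where "K = (1 / ln 2 + 1) * (cmod (f 0) + E)"
  have x: "0 < x" "x \<le> y" "y \<le> 2 * x" "y \<le> 1"
    using z one_minus_le_one_minus_power2[of "cmod z"] one_minus_power2_le_double[of "cmod z"]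
    by (auto simp: x_def y_def)
  have "ln 2 \<le> L" unfolding L_def using x by (simp add: ln_div)
  have "ln (1 / x) \<le> L" unfolding L_def using x by (simp add: field_simps)
  have radial: "cmod (f z) \<le> cmod (f 0) + E * ln (1 / x)"
    unfolding x_def using assms by (intro holomorphic_growth_ln[OF hol z]) auto
  have growth: "cmod (f z) \<le> K * L"
  proof -
    have "0 < ln (2::real)" by simp
    then have "cmod (f 0) \<le> cmod (f 0) * L / ln 2"
      using \<open>ln 2 \<le> L\<close> by (simp add: le_divide_eq mult_left_mono)
    moreover have "E * ln (1 / x) \<le> E * L"
      using \<open>ln (1 / x) \<le> L\<close> \<open>E \<ge> 0\<close> by (rule mult_left_mono)
    moreover have "K * L = (cmod (f 0) * L / ln 2 + E * L) + (E * L / ln 2 + cmod (f 0) * L)"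
      unfolding K_def by (simp add: algebra_simps add_divide_distrib)
    moreover have "0 \<le> E * L / ln 2 + cmod (f 0) * L"
      using \<open>0 < ln 2\<close> \<open>ln 2 \<le> L\<close> \<open>E \<ge> 0\<close> by (simp add: order_trans[of 0 "ln 2" L])
    ultimately show ?thesis using radial by linarith
  qed
  have "K \<ge> 0" unfolding K_def using \<open>E \<ge> 0\<close> by simp
  have "x ^ n * cmod (f z) * G \<le> y ^ n * (K * L) * G"
    using x growth \<open>G \<ge> 0\<close> by (intro mult_right_mono mult_mono power_mono) auto
  also have "\<dots> = K * (y ^ n * L * G)" by (simp add: mult_ac)
  also have "\<dots> \<le> K * A"
    using coeff \<open>K \<ge> 0\<close> by (intro mult_left_mono) (simp_all add: coeff_weight_def y_def L_def)
  finally show ?thesis unfolding x_def K_def by (simp add: mult.commute)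
qed

(* The three cases match the three weights in the norm of g_0. *)
definition zeroth_term_const :: "real \<Rightarrow> real" where
  "zeroth_term_const \<alpha> = (if \<alpha> = 1 then 1 / ln 2 + 1 else 1 + 1 / \<bar>\<alpha> - 1\<bar>)"

lemma one_le_zeroth_term_const: "1 \<le> zeroth_term_const \<alpha>"
  by (simp add: zeroth_term_const_def)

lemma weighted_zeroth_term_le:
  assumes hol: "f holomorphic_on ball 0 1" and z: "cmod z < 1" and "\<alpha> > 0" and "n \<ge> 1"
    and "E \<ge> 0" and "G \<ge> 0"
    and deriv_bound: "\<And>u. cmod u \<le> cmod z \<Longrightarrow> cmod (deriv f u) \<le> E * (1 - cmod u) powr (-\<alpha>)"
    and coeff: "coeff_weight \<alpha> n 0 z * G \<le> A"
  shows "(1 - cmod z) powr (\<alpha> + real n - 1) * cmod (f z) * G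
           \<le> A * (zeroth_term_const \<alpha> * (cmod (f 0) + E))"
proof -
  have "A \<ge> 0"
    using coeff coeff_weight_nonneg[OF z] \<open>G \<ge> 0\<close> by (meson order_trans zero_le_mult_iff)
  consider (gt1) "\<alpha> > 1" | (eq1) "\<alpha> = 1" | (lt1) "\<alpha> < 1" by linarith
  then show ?thesis
  proof cases
    case gt1
    have "cmod (f 0) + E / (\<alpha> - 1) \<le> zeroth_term_const \<alpha> * (cmod (f 0) + E)"
      using gt1 \<open>E \<ge> 0\<close> add_divide_le_one_plus_inverse_mult[of "cmod (f 0)" E "\<alpha> - 1"]
      by (simp add: zeroth_term_const_def)
    with weighted_zeroth_term_le_gt1[OF hol z gt1 \<open>E \<ge> 0\<close> \<open>G \<ge> 0\<close> deriv_bound coeff] \<open>A \<ge> 0\<close>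
    show ?thesis by (meson mult_left_mono order_trans)
  next
    case eq1
    have "(1 - cmod z) ^ n * cmod (f z) * G \<le> A * ((1 / ln 2 + 1) * (cmod (f 0) + E))"
      using deriv_bound coeff eq1 z
      by (intro weighted_zeroth_term_le_eq1[OF hol z \<open>E \<ge> 0\<close> \<open>G \<ge> 0\<close>]) (auto simp: powr_minus_divide)
    then show ?thesis using eq1 z by (simp add: zeroth_term_const_def powr_realpow)
  next
    case lt1
    have "cmod (f 0) + E / (1 - \<alpha>) \<le> zeroth_term_const \<alpha> * (cmod (f 0) + E)"
      using lt1 \<open>E \<ge> 0\<close> add_divide_le_one_plus_inverse_mult[of "cmod (f 0)" E "1 - \<alpha>"]
      by (simp add: zeroth_term_const_def)
    moreover have "\<alpha> + real n \<ge> 1" using \<open>\<alpha> > 0\<close> \<open>n \<ge> 1\<close> by simp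
    ultimately show ?thesis
      using weighted_zeroth_term_le_lt1[OF hol z lt1 _ \<open>E \<ge> 0\<close> \<open>G \<ge> 0\<close> deriv_bound coeff] \<open>A \<ge> 0\<close>
      by (meson mult_left_mono order_trans)
  qed
qed

lemma weighted_lower_order_term_le:
  fixes f :: "complex \<Rightarrow> complex"
  assumes hol: "f holomorphic_on ball 0 1" and "\<alpha> > 0" and "n \<ge> 1" and z: "cmod z < 1"
    and "cmod (f 0) \<le> B"
    and growth: "\<And>j v. 1 \<le> j \<Longrightarrow> j \<le> n \<Longrightarrow> cmod v \<le> cmod z \<Longrightarrow>
           cmod ((deriv ^^ j) f v) \<le> (1 + 1 / \<alpha>) ^ (n - j) * B * (1 - cmod v) powr (-(\<alpha> + real j - 1))"
    and "k < n" and "G \<ge> 0" and coeff: "coeff_weight \<alpha> n k z * G \<le> A"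
  shows "(1 - cmod z) powr (\<alpha> + real n - 1) * cmod ((deriv ^^ k) f z) * G
           \<le> A * (2 * zeroth_term_const \<alpha> * (1 + 1 / \<alpha>) ^ n * B)"
proof -
  define Q where "Q = 1 + 1 / \<alpha>"
  define c where "c = zeroth_term_const \<alpha>"
  have "B \<ge> 0" using \<open>cmod (f 0) \<le> B\<close> norm_ge_zero order_trans by blast
  have "1 \<le> c" "1 \<le> Q" using \<open>\<alpha> > 0\<close> one_le_zeroth_term_const by (simp_all add: c_def Q_def)
  have "A \<ge> 0"
    using coeff coeff_weight_nonneg[OF z] \<open>G \<ge> 0\<close> by (meson order_trans zero_le_mult_iff)
  have Q_pow_le: "Q ^ (n - j) * B \<le> Q ^ n * B" for j
    using \<open>1 \<le> Q\<close> \<open>B \<ge> 0\<close> by (intro mult_right_mono power_increasing) auto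
  have "(1 - cmod z) powr (\<alpha> + real n - 1) * cmod ((deriv ^^ k) f z) * G \<le> A * (2 * c * Q ^ n * B)"
  proof (cases "k = 0")
    case True
    have "(1 - cmod z) powr (\<alpha> + real n - 1) * cmod (f z) * G \<le> A * (c * (cmod (f 0) + Q ^ (n - 1) * B))"
      unfolding c_def
    proof (rule weighted_zeroth_term_le[OF hol z \<open>\<alpha> > 0\<close> \<open>n \<ge> 1\<close> _ \<open>G \<ge> 0\<close>])
      show "0 \<le> Q ^ (n - 1) * B" using \<open>1 \<le> Q\<close> \<open>B \<ge> 0\<close> by simp
      show "cmod (deriv f u) \<le> Q ^ (n - 1) * B * (1 - cmod u) powr (-\<alpha>)" if "cmod u \<le> cmod z" for u
        using growth[of 1 u] that \<open>n \<ge> 1\<close> by (simp add: Q_def)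
      show "coeff_weight \<alpha> n 0 z * G \<le> A" using coeff True by simp
    qed
    also have "\<dots> \<le> A * (2 * c * Q ^ n * B)"
    proof -
      have "cmod (f 0) + Q ^ (n - 1) * B \<le> 2 * (Q ^ n * B)"
        using \<open>cmod (f 0) \<le> B\<close> Q_pow_le[of n] Q_pow_le[of 1] by simp
      then show ?thesis
        using \<open>A \<ge> 0\<close> \<open>1 \<le> c\<close> by (simp add: mult_left_mono mult_ac)
    qed
    finally show ?thesis using True by simp
  next
    case False
    have "(1 - cmod z) powr (\<alpha> + real n - 1) * cmod ((deriv ^^ k) f z) * G \<le> A * (Q ^ (n - k) * B)"
      using False assms growth[of k z] \<open>1 \<le> Q\<close> \<open>B \<ge> 0\<close>
      by (intro weighted_positive_order_term_le[OF z]) (auto simp: Q_def)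
    also have "\<dots> \<le> A * (2 * c * Q ^ n * B)"
    proof -
      have "1 * (Q ^ n * B) \<le> (2 * c) * (Q ^ n * B)"
        using \<open>1 \<le> c\<close> \<open>1 \<le> Q\<close> \<open>B \<ge> 0\<close> by (intro mult_right_mono) auto
      then show ?thesis
        using Q_pow_le[of k] \<open>A \<ge> 0\<close> by (simp add: mult_left_mono mult_ac)
    qed
    finally show ?thesis .
  qed
  then show ?thesis unfolding Q_def c_def .
qed

section \<open>The a priori estimate\<close>

lemma norm_nth_deriv_le_of_equation:
  assumes "(deriv ^^ n) f z + (\<Sum>k<n. (deriv ^^ k) f z * g k z) = F z"
  shows "cmod ((deriv ^^ n) f z) \<le> cmod (F z) + (\<Sum>k<n. cmod ((deriv ^^ k) f z) * cmod (g k z))"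
proof -
  have "(deriv ^^ n) f z = F z - (\<Sum>k<n. (deriv ^^ k) f z * g k z)"
    using assms by (simp add: eq_diff_eq)
  then have "cmod ((deriv ^^ n) f z) \<le> cmod (F z) + cmod (\<Sum>k<n. (deriv ^^ k) f z * g k z)"
    by (simp add: norm_triangle_ineq4)
  also have "\<dots> \<le> cmod (F z) + (\<Sum>k<n. cmod ((deriv ^^ k) f z) * cmod (g k z))"
    using norm_sum[of "\<lambda>k. (deriv ^^ k) f z * g k z" "{..<n}"] by (simp add: norm_mult)
  finally show ?thesis .
qed

lemma weighted_nth_deriv_le_at:
  fixes f F :: "complex \<Rightarrow> complex" and g :: "nat \<Rightarrow> complex \<Rightarrow> complex"
  assumes hol: "f holomorphic_on ball 0 1" and "\<alpha> > 0" and "n \<ge> 1"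
    and equation: "\<forall>z\<in>ball 0 1. (deriv ^^ n) f z + (\<Sum>k<n. (deriv ^^ k) f z * g k z) = F z"
    and F_growth: "\<And>z. cmod z < 1 \<Longrightarrow> cmod (F z) \<le> K * (1 - cmod z) powr (1 - (\<alpha> + real n))"
    and coeff: "\<And>k z. k < n \<Longrightarrow> z \<in> ball 0 1 \<Longrightarrow> coeff_weight \<alpha> n k z * cmod (g k z) \<le> A"
    and small: "4 * real n * zeroth_term_const \<alpha> * (1 + 1 / \<alpha>) ^ n * A \<le> 1"
    and z: "cmod z < 1" and "N \<ge> 0"
    and top_bound: "\<And>v. cmod v \<le> cmod z \<Longrightarrow>
           cmod ((deriv ^^ n) f v) \<le> N * (1 - cmod v) powr (-(\<alpha> + real n - 1))"
  shows "(1 - cmod z) powr (\<alpha> + real n - 1) * cmod ((deriv ^^ n) f z)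
           \<le> K + (N + (\<Sum>i<n. cmod ((deriv ^^ i) f 0))) / 2"
proof -
  define S where "S = (\<Sum>i<n. cmod ((deriv ^^ i) f 0))"
  define w where "w = (1 - cmod z) powr (\<alpha> + real n - 1)"
  define T where "T = 2 * zeroth_term_const \<alpha> * (1 + 1 / \<alpha>) ^ n * (N + S)"
  have "w \<ge> 0" by (simp add: w_def)
  have "S \<ge> 0" by (simp add: S_def sum_nonneg)
  have "cmod ((deriv ^^ 0) f 0) \<le> S" unfolding S_def using \<open>n \<ge> 1\<close> by (intro member_le_sum) auto
  then have "cmod (f 0) \<le> N + S" using \<open>N \<ge> 0\<close> by simp
  have "w * cmod (F z) \<le> w * (K * (1 - cmod z) powr (1 - (\<alpha> + real n)))"
    using F_growth[OF z] \<open>w \<ge> 0\<close> by (rule mult_left_mono)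
  also have "\<dots> = K" using z by (simp add: w_def powr_add[symmetric])
  finally have F_term: "w * cmod (F z) \<le> K" .
  have lower_terms: "w * cmod ((deriv ^^ k) f z) * cmod (g k z) \<le> A * T" if "k < n" for k
    unfolding w_def T_def
  proof (rule weighted_lower_order_term_le[OF hol \<open>\<alpha> > 0\<close> \<open>n \<ge> 1\<close> z \<open>cmod (f 0) \<le> N + S\<close>])
    show "cmod ((deriv ^^ j) f v) \<le> (1 + 1 / \<alpha>) ^ (n - j) * (N + S) * (1 - cmod v) powr (-(\<alpha> + real j - 1))"
      if "1 \<le> j" "j \<le> n" "cmod v \<le> cmod z" for j v
      using higher_deriv_growth[OF hol \<open>\<alpha> > 0\<close> z \<open>N \<ge> 0\<close> top_bound that] by (simp add: S_def)
  qed (use that z coeff in auto)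
  have "A \<ge> 0"
    using coeff[of 0 z] coeff_weight_nonneg[OF z, of \<alpha> n 0] \<open>n \<ge> 1\<close> z
    by (meson less_le_trans mem_ball_0 norm_ge_zero order_trans zero_le_mult_iff zero_less_one)
  from mult_left_mono[OF norm_nth_deriv_le_of_equation \<open>w \<ge> 0\<close>] equation z
  have "w * cmod ((deriv ^^ n) f z)
      \<le> w * cmod (F z) + (\<Sum>k<n. w * cmod ((deriv ^^ k) f z) * cmod (g k z))"
    by (simp add: distrib_left sum_distrib_left mult.assoc)
  also have "\<dots> \<le> K + (\<Sum>k<n. A * T)"
    using F_term lower_terms by (intro add_mono sum_mono) auto
  also have "\<dots> \<le> K + (N + S) / 2"
  proof -
    have "(\<Sum>k<n. A * T) = (4 * real n * zeroth_term_const \<alpha> * (1 + 1 / \<alpha>) ^ n * A) * ((N + S) / 2)"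
      by (simp add: T_def)
    also have "\<dots> \<le> (N + S) / 2"
      using small \<open>A \<ge> 0\<close> \<open>N \<ge> 0\<close> \<open>S \<ge> 0\<close> \<open>\<alpha> > 0\<close> one_le_zeroth_term_const[of \<alpha>]
      by (intro mult_left_le_one_le) auto
    finally show ?thesis by simp
  qed
  finally show ?thesis unfolding w_def S_def by simp
qed

lemma nth_deriv_growth_of_equation:
  fixes f F :: "complex \<Rightarrow> complex" and g :: "nat \<Rightarrow> complex \<Rightarrow> complex"
  assumes hol: "f holomorphic_on ball 0 1" and "\<alpha> > 0" and "n \<ge> 1"
    and equation: "\<forall>z\<in>ball 0 1. (deriv ^^ n) f z + (\<Sum>k<n. (deriv ^^ k) f z * g k z) = F z"
    and F_growth: "\<And>z. cmod z < 1 \<Longrightarrow> cmod (F z) \<le> K * (1 - cmod z) powr (1 - (\<alpha> + real n))"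
    and coeff: "\<And>k z. k < n \<Longrightarrow> z \<in> ball 0 1 \<Longrightarrow> coeff_weight \<alpha> n k z * cmod (g k z) \<le> A"
    and small: "4 * real n * zeroth_term_const \<alpha> * (1 + 1 / \<alpha>) ^ n * A \<le> 1"
    and u: "cmod u < 1"
  shows "cmod ((deriv ^^ n) f u)
           \<le> (2 * K + (\<Sum>i<n. cmod ((deriv ^^ i) f 0))) * (1 - cmod u) powr (-(\<alpha> + real n - 1))"
proof -
  define \<phi> where "\<phi> = (\<lambda>v. (1 - cmod v) powr (\<alpha> + real n - 1) * cmod ((deriv ^^ n) f v))"
  have "(deriv ^^ n) f holomorphic_on ball 0 1" by (rule holomorphic_higher_deriv[OF hol]) auto
  then have "continuous_on (cball 0 (cmod u)) ((deriv ^^ n) f)"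
    by (rule continuous_on_subset[OF holomorphic_on_imp_continuous_on]) (use u in auto)
  then have "continuous_on (cball 0 (cmod u)) \<phi>"
    unfolding \<phi>_def using u by (intro continuous_intros) auto
  then obtain z where z: "z \<in> cball 0 (cmod u)" and z_max: "\<And>v. v \<in> cball 0 (cmod u) \<Longrightarrow> \<phi> v \<le> \<phi> z"
    using continuous_attains_sup[OF compact_cball] by (metis cball_eq_empty empty_iff norm_ge_zero not_less)
  have "cmod z < 1" using z u by simp
  have "0 \<le> \<phi> z" by (simp add: \<phi>_def)
  have top_bound: "cmod ((deriv ^^ n) f v) \<le> \<phi> z * (1 - cmod v) powr (-(\<alpha> + real n - 1))"
    if "cmod v \<le> cmod z" for v
  proof -
    have "cmod v < 1" "\<phi> v \<le> \<phi> z" using that z u z_max[of v] by auto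
    then show ?thesis by (intro le_mult_powr_uminus) (auto simp: \<phi>_def)
  qed
  have "\<phi> z \<le> K + (\<phi> z + (\<Sum>i<n. cmod ((deriv ^^ i) f 0))) / 2"
    using weighted_nth_deriv_le_at[OF hol assms(2-7) \<open>cmod z < 1\<close> \<open>0 \<le> \<phi> z\<close> top_bound]
    by (simp add: \<phi>_def)
  moreover have "\<phi> u \<le> \<phi> z" using z_max[of u] by simp
  ultimately have "\<phi> u \<le> 2 * K + (\<Sum>i<n. cmod ((deriv ^^ i) f 0))" by (simp add: field_simps)
  then show ?thesis using u by (intro le_mult_powr_uminus) (auto simp: \<phi>_def)
qed

lemma bloch_type_of_equation:
  fixes f F :: "complex \<Rightarrow> complex" and g :: "nat \<Rightarrow> complex \<Rightarrow> complex"
  assumes hol: "f holomorphic_on ball 0 1" and "\<alpha> > 0" and "n \<ge> 1"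
    and equation: "\<forall>z\<in>ball 0 1. (deriv ^^ n) f z + (\<Sum>k<n. (deriv ^^ k) f z * g k z) = F z"
    and "K \<ge> 0"
    and F_growth: "\<And>z. cmod z < 1 \<Longrightarrow> cmod (F z) \<le> K * (1 - cmod z) powr (1 - (\<alpha> + real n))"
    and coeff: "\<And>k z. k < n \<Longrightarrow> z \<in> ball 0 1 \<Longrightarrow> coeff_weight \<alpha> n k z * cmod (g k z) \<le> A"
    and small: "4 * real n * zeroth_term_const \<alpha> * (1 + 1 / \<alpha>) ^ n * A \<le> 1"
  shows "f \<in> bloch_type \<alpha>"
proof -
  define M where "M = 2 * K + (\<Sum>i<n. cmod ((deriv ^^ i) f 0))"
  have "M \<ge> 0" using \<open>K \<ge> 0\<close> by (simp add: M_def sum_nonneg)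
  have nth_deriv_growth: "cmod ((deriv ^^ n) f u) \<le> M * (1 - cmod u) powr (-(\<alpha> + real n - 1))"
    if "cmod u < 1" for u
    unfolding M_def using assms that by (intro nth_deriv_growth_of_equation[OF hol]) auto
  show ?thesis
  proof (rule bloch_typeI_deriv_growth[OF hol])
    fix z :: complex assume "cmod z < 1"
    then show "cmod (deriv f z) \<le> (1 + 1 / \<alpha>) ^ (n - 1) * (M + (\<Sum>i<n. cmod ((deriv ^^ i) f 0)))
                * (1 - cmod z) powr (-\<alpha>)"
      using higher_deriv_growth[OF hol \<open>\<alpha> > 0\<close> _ \<open>M \<ge> 0\<close> nth_deriv_growth, of "cmod z" 1 z] \<open>n \<ge> 1\<close>
      by simp
  qed (use \<open>\<alpha> > 0\<close> in simp)
qed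

theorem proposition4p3:
  fixes \<alpha> :: real and n :: nat and F :: "complex \<Rightarrow> complex"
  assumes "\<alpha> > 0" and "n \<ge> 1" and "F \<in> bloch_type (\<alpha> + real n)"
  shows "\<exists>A>0. \<forall>g :: nat \<Rightarrow> complex \<Rightarrow> complex.
           (\<forall>k<n. g k holomorphic_on ball 0 1) \<and> vec_norm \<alpha> n g < ereal A \<longrightarrow>
           (\<forall>f. f holomorphic_on ball 0 1 \<and>
                (\<forall>z\<in>ball 0 1. (deriv ^^ n) f z + (\<Sum>k<n. (deriv ^^ k) f z * g k z) = F z)
                \<longrightarrow> f \<in> bloch_type \<alpha>)"
proof -
  obtain K where "K \<ge> 0" and F_growth:
    "\<And>z. cmod z < 1 \<Longrightarrow> cmod (F z) \<le> K * (1 - cmod z) powr (1 - (\<alpha> + real n))"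
    using bloch_type_growth[OF assms(3)] assms(1,2) by auto
  define A where "A = 1 / (4 * real n * zeroth_term_const \<alpha> * (1 + 1 / \<alpha>) ^ n)"
  have "0 < 4 * real n * zeroth_term_const \<alpha> * (1 + 1 / \<alpha>) ^ n"
    using assms(1,2) one_le_zeroth_term_const[of \<alpha>] by (intro mult_pos_pos zero_less_power add_pos_pos) auto
  then have "A > 0" and small: "4 * real n * zeroth_term_const \<alpha> * (1 + 1 / \<alpha>) ^ n * A \<le> 1"
    by (simp_all add: A_def)
  show ?thesis
  proof (intro exI[of _ A] conjI allI impI \<open>A > 0\<close>)
    fix g :: "nat \<Rightarrow> complex \<Rightarrow> complex" and f :: "complex \<Rightarrow> complex"
    assume "(\<forall>k<n. g k holomorphic_on ball 0 1) \<and> vec_norm \<alpha> n g < ereal A"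
    then have coeff: "\<And>k z. k < n \<Longrightarrow> z \<in> ball 0 1 \<Longrightarrow> coeff_weight \<alpha> n k z * cmod (g k z) \<le> A"
      using coeff_weight_le_of_vec_norm_less by blast
    assume "f holomorphic_on ball 0 1 \<and>
      (\<forall>z\<in>ball 0 1. (deriv ^^ n) f z + (\<Sum>k<n. (deriv ^^ k) f z * g k z) = F z)"
    then show "f \<in> bloch_type \<alpha>"
      using bloch_type_of_equation[OF _ assms(1,2) _ \<open>K \<ge> 0\<close> F_growth coeff small] by blast
  qed
qed

end
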